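(* Let $\mu$ be a bounded signed Borel measure on a Hausdorff space ${\mathscr X}$ and let ${\mathscr A}$ be a set of finite Borel partitions of ${\mathscr X}$, directed under refinement. Then $\alpha\mapsto\|\mu_\alpha\|_{1,\alpha}=\sum_{A\in\alpha}|\mu(A)|$ is monotone increasing on ${\mathscr A}$ (i.e. $\alpha\le\beta$ implies $\|\mu_\alpha\|_{1,\alpha}\le\|\mu_\beta\|_{1,\beta}$). If moreover ${\mathscr A}$ resolves ${\mathscr X}$, then $$\|\mu\|_{1}=|\mu|({\mathscr X})=\sup_{\alpha\in{\mathscr A}}\sum_{A\in\alpha}|\mu(A)|.$$
   Context: A (finite Borel) partition $\alpha$ of ${\mathscr X}$ is a finite collection of non-empty, pairwise disjoint Borel sets with union ${\mathscr X}$. $\alpha\le\beta$ means $\beta$ refines $\alpha$. ${\mathscr A}$ resolves ${\mathscr X}$ if the $\sigma$-algebra generated by all sets occurring in partitions of ${\mathscr A}$ is the Borel $\sigma$-algebra. For a signed measure $\mu$, $\mu_\alpha=(\mu(A))_{A\in\alpha}$ is its $\alpha$-histogram. *)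

theory Defs
  imports "HOL-Analysis.Analysis"
begin

text \<open>A real-valued signed Borel measure: countably additive on Borel sets.
  (Values on non-Borel sets are irrelevant.)\<close>
definition signed_borel_measure :: "('a::topological_space set \<Rightarrow> real) \<Rightarrow> bool" where
  "signed_borel_measure \<mu> \<longleftrightarrow>
     \<mu> {} = 0 \<and>
     (\<forall>A::nat \<Rightarrow> 'a set. range A \<subseteq> sets borel \<and> disjoint_family A \<longrightarrow>
        (\<lambda>i. \<mu> (A i)) sums \<mu> (\<Union>i. A i))"

definition total_variation :: "('a::topological_space set \<Rightarrow> real) \<Rightarrow> ennreal" where
  "total_variation \<mu> =
     (SUP A \<in> {A::nat \<Rightarrow> 'a set. range A \<subseteq> sets borel \<and> disjoint_family A \<and> (\<Union>i. A i) = UNIV}.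
        (\<Sum>i. ennreal \<bar>\<mu> (A i)\<bar>))"

definition borel_partition :: "'a::topological_space set set \<Rightarrow> bool" where
  "borel_partition \<alpha> \<longleftrightarrow> finite \<alpha> \<and> {} \<notin> \<alpha> \<and> \<alpha> \<subseteq> sets borel \<and>
     disjoint \<alpha> \<and> \<Union>\<alpha> = UNIV"

text \<open>refines alpha beta: alpha \<le> beta, i.e. beta refines alpha.\<close>
definition refines :: "'a set set \<Rightarrow> 'a set set \<Rightarrow> bool" where
  "refines \<alpha> \<beta> \<longleftrightarrow> (\<forall>B\<in>\<beta>. \<exists>A\<in>\<alpha>. B \<subseteq> A)"

definition directed_by_refinement :: "'a set set set \<Rightarrow> bool" where
  "directed_by_refinement \<A> \<longleftrightarrow> \<A> \<noteq> {} \<and>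
     (\<forall>\<alpha>\<in>\<A>. \<forall>\<beta>\<in>\<A>. \<exists>\<gamma>\<in>\<A>. refines \<alpha> \<gamma> \<and> refines \<beta> \<gamma>)"

definition resolves :: "'a::topological_space set set set \<Rightarrow> bool" where
  "resolves \<A> \<longleftrightarrow> sigma_sets UNIV (\<Union>\<A>) = sets borel"

end

theory Submission
  imports Defs
begin

text \<open>
  Monotonicity: if \<open>\<beta>\<close> refines \<open>\<alpha>\<close>, every cell of \<open>\<alpha>\<close> is a finite disjoint union of
  cells of \<open>\<beta>\<close>, so the triangle inequality gives
  \<open>\<Sum>A\<in>\<alpha>. \<bar>\<mu> A\<bar> \<le> \<Sum>B\<in>\<beta>. \<bar>\<mu> B\<bar>\<close>.

  Total variation: for a countable Borel partition, gathering the cells of nonnegative mass into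
  a set \<open>E\<close> gives \<open>\<Sum>i. \<bar>\<mu> (A i)\<bar> = \<mu> E - \<mu> (- E)\<close>, so it suffices to bound
  \<open>\<mu> E - \<mu> (- E)\<close> by \<open>s = (SUP \<alpha>\<in>\<A>. \<Sum>A\<in>\<alpha>. \<bar>\<mu> A\<bar>)\<close> for every Borel set \<open>E\<close>.
  This holds when \<open>E\<close> is a union of cells of some \<open>\<alpha> \<in> \<A>\<close>; since \<open>\<A>\<close> is directed,
  such sets form an algebra, which generates the Borel sets because \<open>\<A>\<close> resolves the space.
  The Borel sets satisfying the bound form a monotone class by continuity of \<open>\<mu>\<close> along
  monotone sequences, so the monotone class theorem extends the bound to all Borel sets.
\<close>

section \<open>Signed Borel measures\<close>

lemma signed_borel_measure_empty: "signed_borel_measure \<mu> \<Longrightarrow> \<mu> {} = 0"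
  by (simp add: signed_borel_measure_def)

lemma signed_borel_measure_Un:
  assumes \<mu>: "signed_borel_measure \<mu>" and "A \<in> sets borel" "B \<in> sets borel" "A \<inter> B = {}"
  shows "\<mu> (A \<union> B) = \<mu> A + \<mu> B"
proof -
  define D where "D i = (if i = 0 then A else if i = 1 then B else {})" for i :: nat
  have "range D \<subseteq> sets borel" "disjoint_family D"
    using assms by (auto simp: D_def disjoint_family_on_def)
  then have "(\<lambda>i. \<mu> (D i)) sums \<mu> (\<Union>i. D i)"
    using \<mu> by (simp add: signed_borel_measure_def)
  moreover have "(\<lambda>i. \<mu> (D i)) sums (\<Sum>i\<in>{0, 1}. \<mu> (D i))"
    by (rule sums_finite) (auto simp: D_def signed_borel_measure_empty[OF \<mu>])
  moreover have "(\<Union>i. D i) = A \<union> B"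
    by (auto simp: D_def split: if_splits)
  ultimately show ?thesis
    by (simp add: D_def sums_unique2)
qed

lemma signed_borel_measure_finite_UN:
  assumes \<mu>: "signed_borel_measure \<mu>" and "finite I" and "disjoint_family_on D I"
    and "D ` I \<subseteq> sets borel"
  shows "\<mu> (\<Union>i\<in>I. D i) = (\<Sum>i\<in>I. \<mu> (D i))"
  using assms(2-4)
proof (induction I rule: finite_induct)
  case empty
  then show ?case by (simp add: signed_borel_measure_empty[OF \<mu>])
next
  case (insert i I)
  have "D i \<inter> (\<Union>j\<in>I. D j) = {}"
    using insert.prems(1) insert.hyps(2) by (fastforce simp: disjoint_family_on_def)
  moreover have "(\<Union>j\<in>I. D j) \<in> sets borel"
    using insert.prems(2) insert.hyps(1) by (intro sets.finite_UN) auto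
  ultimately have "\<mu> (\<Union>j\<in>insert i I. D j) = \<mu> (D i) + \<mu> (\<Union>j\<in>I. D j)"
    using insert.prems(2) by (simp add: signed_borel_measure_Un[OF \<mu>])
  with insert show ?case
    by (simp add: disjoint_family_on_mono[of I "insert i I"] subset_insertI)
qed

lemma signed_borel_measure_Compl:
  assumes \<mu>: "signed_borel_measure \<mu>" and "A \<in> sets borel"
  shows "\<mu> (- A) = \<mu> UNIV - \<mu> A"
  using signed_borel_measure_Un[OF \<mu>, of A "- A"] assms by simp

lemma signed_borel_measure_incseq:
  assumes \<mu>: "signed_borel_measure \<mu>" and A: "range A \<subseteq> sets borel" and "incseq A"
  shows "(\<lambda>n. \<mu> (A n)) \<longlonglongrightarrow> \<mu> (\<Union>n. A n)"
proof -
  have disj: "range (disjointed A) \<subseteq> sets borel"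
    using sets.range_disjointed_sets[OF A] .
  have "(\<lambda>i. \<mu> (disjointed A i)) sums \<mu> (\<Union>i. disjointed A i)"
    using \<mu> disj disjoint_family_disjointed by (auto simp: signed_borel_measure_def)
  then have "(\<lambda>i. \<mu> (disjointed A i)) sums \<mu> (\<Union>n. A n)"
    by (simp only: UN_disjointed_eq)
  then have "(\<lambda>n. \<Sum>i<Suc n. \<mu> (disjointed A i)) \<longlonglongrightarrow> \<mu> (\<Union>n. A n)"
    unfolding sums_def by (rule LIMSEQ_Suc)
  moreover have "(\<Sum>i<Suc n. \<mu> (disjointed A i)) = \<mu> (A n)" for n
  proof -
    have "(\<Sum>i<Suc n. \<mu> (disjointed A i)) = \<mu> (\<Union>i<Suc n. disjointed A i)"
      using disj by (intro signed_borel_measure_finite_UN[OF \<mu>, symmetric])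
        (auto intro: disjoint_family_on_mono[OF subset_UNIV disjoint_family_disjointed])
    also have "(\<Union>i<Suc n. disjointed A i) = A n"
      using finite_UN_disjointed_eq[of A "Suc n"] \<open>incseq A\<close>
      by (force simp: atLeast0LessThan incseq_def less_Suc_eq_le)
    finally show ?thesis .
  qed
  ultimately show ?thesis by simp
qed

lemma signed_borel_measure_decseq:
  assumes \<mu>: "signed_borel_measure \<mu>" and A: "range A \<subseteq> sets borel" and "decseq A"
  shows "(\<lambda>n. \<mu> (A n)) \<longlonglongrightarrow> \<mu> (\<Inter>n. A n)"
proof -
  have "(\<Inter>n. A n) \<in> sets borel"
    using A by (intro sets.countable_INT) auto
  then have limit: "\<mu> UNIV - \<mu> (- (\<Inter>n. A n)) = \<mu> (\<Inter>n. A n)"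
    by (simp only: signed_borel_measure_Compl[OF \<mu>])
  have terms: "\<mu> UNIV - \<mu> (- A n) = \<mu> (A n)" for n
    using A by (simp add: signed_borel_measure_Compl[OF \<mu>] image_subset_iff)
  have "(\<lambda>n. \<mu> (- A n)) \<longlonglongrightarrow> \<mu> (\<Union>n. - A n)"
    using assms by (intro signed_borel_measure_incseq) (auto simp: decseq_def incseq_def)
  then have "(\<lambda>n. \<mu> UNIV - \<mu> (- A n)) \<longlonglongrightarrow> \<mu> UNIV - \<mu> (- (\<Inter>n. A n))"
    by (intro tendsto_intros) (simp add: uminus_INF)
  then show ?thesis unfolding terms limit .
qed

section \<open>The monotone class theorem\<close>

inductive_set monotone_class_generated :: "'a set set \<Rightarrow> 'a set set" for G :: "'a set set"
where
  Basic: "a \<in> G \<Longrightarrow> a \<in> monotone_class_generated G"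
| Inc: "(\<And>i. A i \<in> monotone_class_generated G) \<Longrightarrow> incseq A \<Longrightarrow>
    (\<Union>i. A i) \<in> monotone_class_generated G"
| Dec: "(\<And>i. A i \<in> monotone_class_generated G) \<Longrightarrow> decseq A \<Longrightarrow>
    (\<Inter>i. A i) \<in> monotone_class_generated G"

lemma monotone_class_generated_subset:
  assumes "G \<subseteq> M"
    and "\<And>A. range A \<subseteq> M \<Longrightarrow> incseq A \<Longrightarrow> (\<Union>i. A i) \<in> M"
    and "\<And>A. range A \<subseteq> M \<Longrightarrow> decseq A \<Longrightarrow> (\<Inter>i. A i) \<in> M"
  shows "monotone_class_generated G \<subseteq> M"
proof
  show "a \<in> M" if "a \<in> monotone_class_generated G" for a
    using that by induction (use assms in blast)+
qed

lemma monotone_class_generated_Compl: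
  assumes "algebra \<Omega> G" and "a \<in> monotone_class_generated G"
  shows "\<Omega> - a \<in> monotone_class_generated G"
  using assms(2)
proof induction
  case (Basic a)
  then show ?case
    using algebra.compl_sets[OF assms(1)] by (blast intro: monotone_class_generated.Basic)
next
  case (Inc A)
  have "(\<Inter>i. \<Omega> - A i) \<in> monotone_class_generated G"
    using Inc by (intro monotone_class_generated.Dec) (auto simp: incseq_def decseq_def)
  moreover have "\<Omega> - (\<Union>i. A i) = (\<Inter>i. \<Omega> - A i)" by blast
  ultimately show ?case by (simp only:)
next
  case (Dec A)
  have "(\<Union>i. \<Omega> - A i) \<in> monotone_class_generated G"
    using Dec by (intro monotone_class_generated.Inc) (auto simp: incseq_def decseq_def)
  moreover have "\<Omega> - (\<Inter>i. A i) = (\<Union>i. \<Omega> - A i)" by blast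
  ultimately show ?case by (simp only:)
qed

lemma Int_monotone_class_generated:
  assumes "b \<in> monotone_class_generated G"
    and "\<And>c. c \<in> G \<Longrightarrow> a \<inter> c \<in> monotone_class_generated G"
  shows "a \<inter> b \<in> monotone_class_generated G"
  using assms(1)
proof induction
  case (Basic c)
  then show ?case by (fact assms(2))
next
  case (Inc A)
  have "(\<Union>i. a \<inter> A i) \<in> monotone_class_generated G"
    using Inc by (intro monotone_class_generated.Inc) (auto simp: incseq_def)
  then show ?case by (simp only: Int_UN_distrib)
next
  case (Dec A)
  have "(\<Inter>i. a \<inter> A i) \<in> monotone_class_generated G"
    using Dec by (intro monotone_class_generated.Dec) (auto simp: decseq_def)
  moreover have "a \<inter> (\<Inter>i. A i) = (\<Inter>i. a \<inter> A i)" by blast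
  ultimately show ?case by (simp only:)
qed

lemma monotone_class_generated_Int:
  assumes G: "algebra \<Omega> G"
    and a: "a \<in> monotone_class_generated G" and b: "b \<in> monotone_class_generated G"
  shows "a \<inter> b \<in> monotone_class_generated G"
proof (rule Int_monotone_class_generated[OF b])
  interpret algebra \<Omega> G by (fact G)
  fix c assume "c \<in> G"
  have "c \<inter> a \<in> monotone_class_generated G"
    using a by (rule Int_monotone_class_generated)
      (use \<open>c \<in> G\<close> in \<open>auto intro: monotone_class_generated.Basic\<close>)
  then show "a \<inter> c \<in> monotone_class_generated G" by (simp only: Int_commute)
qed

lemma sigma_algebra_monotone_class_generated:
  assumes G: "algebra \<Omega> G"
  shows "sigma_algebra \<Omega> (monotone_class_generated G)" (is "sigma_algebra \<Omega> ?m")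
proof -
  interpret algebra \<Omega> G by (fact G)
  have "a \<subseteq> \<Omega>" if "a \<in> ?m" for a
    using that by induction (use sets_into_space in blast)+
  moreover have "{} \<in> ?m"
    using monotone_class_generated_Compl[OF G monotone_class_generated.Basic[OF top]]
    by (simp only: Diff_cancel)
  ultimately have m: "algebra \<Omega> ?m"
    unfolding algebra_iff_Int
    using monotone_class_generated_Compl[OF G] monotone_class_generated_Int[OF G] by blast
  have "(\<Union>i. A i) \<in> ?m" if "range A \<subseteq> ?m" for A :: "nat \<Rightarrow> 'a set"
  proof -
    interpret m: algebra \<Omega> ?m by (fact m)
    have "(\<Union>n. \<Union>i\<in>{0..<n}. A i) \<in> ?m"
    proof (rule monotone_class_generated.Inc)
      show "(\<Union>i\<in>{0..<n}. A i) \<in> ?m" for n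
        using that by (intro m.finite_UN) auto
      show "incseq (\<lambda>n. \<Union>i\<in>{0..<n}. A i)"
        by (intro incseq_SucI) (auto simp: atLeastLessThanSuc)
    qed
    then show ?thesis by (simp only: UN_UN_finite_eq)
  qed
  with m show ?thesis by (simp add: sigma_algebra_iff)
qed

theorem monotone_class_theorem:
  assumes "algebra \<Omega> G" and "G \<subseteq> M"
    and "\<And>A. range A \<subseteq> M \<Longrightarrow> incseq A \<Longrightarrow> (\<Union>i. A i) \<in> M"
    and "\<And>A. range A \<subseteq> M \<Longrightarrow> decseq A \<Longrightarrow> (\<Inter>i. A i) \<in> M"
  shows "sigma_sets \<Omega> G \<subseteq> M"
proof -
  have "sigma_sets \<Omega> G \<subseteq> monotone_class_generated G"
    using sigma_algebra_monotone_class_generated[OF assms(1)]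
    by (rule sigma_algebra.sigma_sets_subset) (auto intro: monotone_class_generated.Basic)
  also have "\<dots> \<subseteq> M"
    using assms(2-4) by (rule monotone_class_generated_subset)
  finally show ?thesis .
qed

section \<open>Unions of partition cells\<close>

lemma algebra_UN_directed:
  assumes "I \<noteq> {}" and "\<And>i. i \<in> I \<Longrightarrow> algebra \<Omega> (M i)"
    and "\<And>i j. i \<in> I \<Longrightarrow> j \<in> I \<Longrightarrow> \<exists>k\<in>I. M i \<subseteq> M k \<and> M j \<subseteq> M k"
  shows "algebra \<Omega> (\<Union>i\<in>I. M i)"
  unfolding algebra_iff_Int
proof (intro conjI ballI)
  show "(\<Union>i\<in>I. M i) \<subseteq> Pow \<Omega>" "{} \<in> (\<Union>i\<in>I. M i)"
    using assms(1,2) unfolding algebra_iff_Int by blast+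
  show "\<Omega> - a \<in> (\<Union>i\<in>I. M i)" if "a \<in> (\<Union>i\<in>I. M i)" for a
    using that assms(2) by (auto simp: algebra_iff_Int)
  show "a \<inter> b \<in> (\<Union>i\<in>I. M i)" if ab: "a \<in> (\<Union>i\<in>I. M i)" "b \<in> (\<Union>i\<in>I. M i)" for a b
  proof -
    obtain i j where "i \<in> I" "a \<in> M i" "j \<in> I" "b \<in> M j" using ab by blast
    moreover from this obtain k where "k \<in> I" "M i \<subseteq> M k" "M j \<subseteq> M k" using assms(3) by blast
    ultimately have "a \<in> M k" "b \<in> M k" by blast+
    then have "a \<inter> b \<in> M k"
      using assms(2)[OF \<open>k \<in> I\<close>] unfolding algebra_iff_Int by blast
    with \<open>k \<in> I\<close> show ?thesis by blast
  qed
qed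

definition cell_unions :: "'a set set \<Rightarrow> 'a set set" where
  "cell_unions \<alpha> = Union ` Pow \<alpha>"

lemma mem_Union_cells_iff:
  assumes "disjoint \<alpha>" "S \<subseteq> \<alpha>" "A \<in> \<alpha>" "x \<in> A"
  shows "x \<in> \<Union>S \<longleftrightarrow> A \<in> S"
proof
  assume "x \<in> \<Union>S"
  then obtain B where "B \<in> S" "x \<in> B" by blast
  with assms have "A = B" by (auto dest: disjointD)
  with \<open>B \<in> S\<close> show "A \<in> S" by simp
qed (use assms in blast)

lemma Compl_Union_cells:
  assumes "disjoint \<alpha>" "\<Union>\<alpha> = UNIV" "S \<subseteq> \<alpha>"
  shows "- \<Union>S = \<Union>(\<alpha> - S)"
proof (intro equalityI subsetI)
  fix x assume x: "x \<in> - \<Union>S"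
  have "x \<in> \<Union>\<alpha>" using assms(2) by simp
  then obtain A where A: "A \<in> \<alpha>" "x \<in> A" by blast
  then have "A \<notin> S" using x mem_Union_cells_iff[OF assms(1,3) A] by simp
  with A show "x \<in> \<Union>(\<alpha> - S)" by blast
next
  fix x assume "x \<in> \<Union>(\<alpha> - S)"
  then obtain A where A: "A \<in> \<alpha>" "x \<in> A" and "A \<notin> S" by blast
  then show "x \<in> - \<Union>S" using mem_Union_cells_iff[OF assms(1,3) A] by simp
qed

lemma Int_Union_cells:
  assumes "disjoint \<alpha>" "S \<subseteq> \<alpha>" "T \<subseteq> \<alpha>"
  shows "\<Union>S \<inter> \<Union>T = \<Union>(S \<inter> T)"
proof (intro equalityI subsetI)
  fix x assume x: "x \<in> \<Union>S \<inter> \<Union>T"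
  then obtain A where "A \<in> S" "x \<in> A" by blast
  moreover from this have "A \<in> T"
    using x assms(2) mem_Union_cells_iff[OF assms(1,3), of A x] by blast
  ultimately show "x \<in> \<Union>(S \<inter> T)" by blast
qed blast

lemma algebra_cell_unions:
  assumes "disjoint \<alpha>" and "\<Union>\<alpha> = UNIV"
  shows "algebra UNIV (cell_unions \<alpha>)"
  unfolding algebra_iff_Int cell_unions_def
proof (intro conjI ballI)
  fix a b assume "a \<in> Union ` Pow \<alpha>" "b \<in> Union ` Pow \<alpha>"
  then obtain S T where a: "a = \<Union>S" "S \<subseteq> \<alpha>" and b: "b = \<Union>T" "T \<subseteq> \<alpha>" by blast
  show "UNIV - a \<in> Union ` Pow \<alpha>"
    using Compl_Union_cells[OF assms a(2)] a(1) by (simp add: Compl_eq_Diff_UNIV[symmetric])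
  show "a \<inter> b \<in> Union ` Pow \<alpha>"
    unfolding a(1) b(1) Int_Union_cells[OF assms(1) a(2) b(2)] using a(2) by (intro imageI) auto
qed auto

lemma Union_cells_refines:
  assumes "refines \<alpha> \<gamma>" "disjoint \<alpha>" "\<Union>\<gamma> = UNIV" "S \<subseteq> \<alpha>"
  shows "\<Union>S = \<Union>{C\<in>\<gamma>. C \<subseteq> \<Union>S}"
proof (intro equalityI subsetI)
  fix x assume x: "x \<in> \<Union>S"
  have "x \<in> \<Union>\<gamma>" using assms(3) by simp
  then obtain C where C: "C \<in> \<gamma>" "x \<in> C" by blast
  then obtain A where A: "A \<in> \<alpha>" "C \<subseteq> A" using assms(1) by (auto simp: refines_def)
  then have "A \<in> S" using mem_Union_cells_iff[OF assms(2,4)] x C by blast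
  with A C show "x \<in> \<Union>{C\<in>\<gamma>. C \<subseteq> \<Union>S}" by blast
qed blast

lemma cell_unions_refines:
  assumes "refines \<alpha> \<gamma>" "disjoint \<alpha>" "\<Union>\<gamma> = UNIV"
  shows "cell_unions \<alpha> \<subseteq> cell_unions \<gamma>"
  unfolding cell_unions_def
proof (clarify)
  fix S assume "S \<subseteq> \<alpha>"
  then have "\<Union>S = \<Union>{C\<in>\<gamma>. C \<subseteq> \<Union>S}" by (rule Union_cells_refines[OF assms])
  then show "\<Union>S \<in> Union ` Pow \<gamma>" by blast
qed

lemma algebra_cell_unions_directed:
  assumes "\<forall>\<alpha>\<in>\<A>. borel_partition \<alpha>" and "directed_by_refinement \<A>"
  shows "algebra UNIV (\<Union>\<alpha>\<in>\<A>. cell_unions \<alpha>)"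
proof (rule algebra_UN_directed)
  show "\<A> \<noteq> {}" using assms(2) by (simp add: directed_by_refinement_def)
  show "algebra UNIV (cell_unions \<alpha>)" if "\<alpha> \<in> \<A>" for \<alpha>
    using assms(1) that by (intro algebra_cell_unions) (auto simp: borel_partition_def)
  show "\<exists>\<gamma>\<in>\<A>. cell_unions \<alpha> \<subseteq> cell_unions \<gamma> \<and> cell_unions \<beta> \<subseteq> cell_unions \<gamma>"
    if "\<alpha> \<in> \<A>" "\<beta> \<in> \<A>" for \<alpha> \<beta>
    using assms that unfolding directed_by_refinement_def borel_partition_def
    by (metis cell_unions_refines)
qed

lemma sum_refines:
  assumes "refines \<alpha> \<beta>" "disjoint \<alpha>" "finite \<alpha>" "finite \<beta>" "{} \<notin> \<beta>"
  shows "(\<Sum>B\<in>\<beta>. f B) = (\<Sum>A\<in>\<alpha>. \<Sum>B\<in>{B\<in>\<beta>. B \<subseteq> A}. f B)"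
proof -
  have "(\<Sum>B\<in>(\<Union>A\<in>\<alpha>. {B\<in>\<beta>. B \<subseteq> A}). f B) = (\<Sum>A\<in>\<alpha>. \<Sum>B\<in>{B\<in>\<beta>. B \<subseteq> A}. f B)"
  proof (rule sum.UNION_disjoint)
    show "\<forall>A\<in>\<alpha>. \<forall>A'\<in>\<alpha>. A \<noteq> A' \<longrightarrow> {B\<in>\<beta>. B \<subseteq> A} \<inter> {B\<in>\<beta>. B \<subseteq> A'} = {}"
    proof (intro ballI impI)
      fix A A' assume "A \<in> \<alpha>" "A' \<in> \<alpha>" "A \<noteq> A'"
      with assms(2) have "A \<inter> A' = {}" by (rule disjointD)
      show "{B\<in>\<beta>. B \<subseteq> A} \<inter> {B\<in>\<beta>. B \<subseteq> A'} = {}"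
      proof (rule equals0I)
        fix B assume "B \<in> {B\<in>\<beta>. B \<subseteq> A} \<inter> {B\<in>\<beta>. B \<subseteq> A'}"
        then have "B \<in> \<beta>" "B \<subseteq> A \<inter> A'" by auto
        with \<open>A \<inter> A' = {}\<close> assms(5) show False by (metis subset_empty)
      qed
    qed
  qed (use assms(3,4) in auto)
  moreover have "(\<Union>A\<in>\<alpha>. {B\<in>\<beta>. B \<subseteq> A}) = \<beta>"
    using assms(1) unfolding refines_def by blast
  ultimately show ?thesis by (simp only:)
qed

section \<open>Partition sums and total variation\<close>

lemma cell_unions_subset_borel:
  assumes "borel_partition \<alpha>"
  shows "cell_unions \<alpha> \<subseteq> sets borel"
  using assms unfolding cell_unions_def borel_partition_def
  by (auto intro!: sets.finite_Union intro: finite_subset)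

lemma signed_borel_measure_Union_cells:
  assumes \<mu>: "signed_borel_measure \<mu>" and \<alpha>: "borel_partition \<alpha>" and "S \<subseteq> \<alpha>"
  shows "\<mu> (\<Union>S) = (\<Sum>A\<in>S. \<mu> A)"
proof -
  have "finite S" "S \<subseteq> sets borel"
    using \<alpha> \<open>S \<subseteq> \<alpha>\<close> by (auto simp: borel_partition_def intro: finite_subset)
  moreover have "disjoint_family_on (\<lambda>A. A) S"
    using \<alpha> \<open>S \<subseteq> \<alpha>\<close> unfolding disjoint_family_on_def borel_partition_def
    by (metis disjointD subsetD)
  ultimately show ?thesis
    using signed_borel_measure_finite_UN[OF \<mu>, of S "\<lambda>A. A"] by simp
qed

lemma diff_Compl_le_sum_abs:
  assumes \<mu>: "signed_borel_measure \<mu>" and \<alpha>: "borel_partition \<alpha>" and "E \<in> cell_unions \<alpha>"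
  shows "\<mu> E - \<mu> (- E) \<le> (\<Sum>A\<in>\<alpha>. \<bar>\<mu> A\<bar>)"
proof -
  obtain S where E: "E = \<Union>S" and S: "S \<subseteq> \<alpha>"
    using \<open>E \<in> cell_unions \<alpha>\<close> by (auto simp: cell_unions_def)
  have "- E = \<Union>(\<alpha> - S)"
    using \<alpha> S by (simp add: E Compl_Union_cells borel_partition_def)
  then have "\<mu> E - \<mu> (- E) = (\<Sum>A\<in>S. \<mu> A) - (\<Sum>A\<in>\<alpha> - S. \<mu> A)"
    using S by (simp add: E signed_borel_measure_Union_cells[OF \<mu> \<alpha>])
  also have "\<dots> \<le> (\<Sum>A\<in>S. \<bar>\<mu> A\<bar>) + (\<Sum>A\<in>\<alpha> - S. \<bar>\<mu> A\<bar>)"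
  proof -
    have "(\<Sum>A\<in>S. \<mu> A) \<le> (\<Sum>A\<in>S. \<bar>\<mu> A\<bar>)" by (intro sum_mono) simp
    moreover have "- (\<Sum>A\<in>\<alpha> - S. \<mu> A) \<le> (\<Sum>A\<in>\<alpha> - S. \<bar>\<mu> A\<bar>)"
      using abs_ge_minus_self sum_abs order_trans by blast
    ultimately show ?thesis by linarith
  qed
  also have "\<dots> = (\<Sum>A\<in>\<alpha>. \<bar>\<mu> A\<bar>)"
    using \<alpha> S by (simp add: borel_partition_def sum.subset_diff[of S \<alpha>])
  finally show ?thesis .
qed

lemma sum_abs_refines_mono:
  assumes \<mu>: "signed_borel_measure \<mu>" and \<alpha>: "borel_partition \<alpha>" and \<beta>: "borel_partition \<beta>"
    and "refines \<alpha> \<beta>"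
  shows "(\<Sum>A\<in>\<alpha>. \<bar>\<mu> A\<bar>) \<le> (\<Sum>B\<in>\<beta>. \<bar>\<mu> B\<bar>)"
proof -
  have "\<mu> A = (\<Sum>B\<in>{B\<in>\<beta>. B \<subseteq> A}. \<mu> B)" if "A \<in> \<alpha>" for A
  proof -
    have "A = \<Union>{B\<in>\<beta>. B \<subseteq> A}"
      using Union_cells_refines[OF \<open>refines \<alpha> \<beta>\<close>, of "{A}"] \<alpha> \<beta> that
      by (simp add: borel_partition_def)
    then show ?thesis
      using signed_borel_measure_Union_cells[OF \<mu> \<beta>, of "{B\<in>\<beta>. B \<subseteq> A}"] by simp
  qed
  then have "(\<Sum>A\<in>\<alpha>. \<bar>\<mu> A\<bar>) \<le> (\<Sum>A\<in>\<alpha>. \<Sum>B\<in>{B\<in>\<beta>. B \<subseteq> A}. \<bar>\<mu> B\<bar>)"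
    by (simp add: sum_mono)
  also have "\<dots> = (\<Sum>B\<in>\<beta>. \<bar>\<mu> B\<bar>)"
    using \<alpha> \<beta> \<open>refines \<alpha> \<beta>\<close> by (simp add: sum_refines borel_partition_def)
  finally show ?thesis .
qed

lemma sum_abs_le_total_variation:
  assumes \<mu>: "signed_borel_measure \<mu>" and \<alpha>: "borel_partition \<alpha>"
  shows "ennreal (\<Sum>A\<in>\<alpha>. \<bar>\<mu> A\<bar>) \<le> total_variation \<mu>"
proof -
  obtain n and f :: "nat \<Rightarrow> 'a set" where \<alpha>_eq: "\<alpha> = f ` {..<n}" and inj: "inj_on f {..<n}"
    using \<alpha> finite_imp_nat_seg_image_inj_on[of \<alpha>] by (auto simp: borel_partition_def lessThan_def)
  define D where "D i = (if i < n then f i else {})" for i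
  have "range D \<subseteq> sets borel" "(\<Union>i. D i) = UNIV"
    using \<alpha> by (auto simp: D_def \<alpha>_eq borel_partition_def split: if_splits)
  moreover have "disjoint_family D"
    unfolding disjoint_family_on_def
  proof (intro ballI impI)
    fix i j :: nat assume "i \<noteq> j"
    show "D i \<inter> D j = {}"
    proof (cases "i < n \<and> j < n")
      case True
      with inj \<open>i \<noteq> j\<close> have "f i \<noteq> f j" by (auto dest: inj_onD)
      moreover have "disjoint \<alpha>" using \<alpha> by (simp add: borel_partition_def)
      ultimately show ?thesis
        using True by (simp add: D_def \<alpha>_eq disjointD)
    qed (auto simp: D_def)
  qed
  ultimately have "(\<Sum>i. ennreal \<bar>\<mu> (D i)\<bar>) \<le> total_variation \<mu>"
    unfolding total_variation_def by (intro SUP_upper) auto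
  moreover have "(\<Sum>i. ennreal \<bar>\<mu> (D i)\<bar>) = ennreal (\<Sum>A\<in>\<alpha>. \<bar>\<mu> A\<bar>)"
  proof -
    have "(\<Sum>i. ennreal \<bar>\<mu> (D i)\<bar>) = (\<Sum>i<n. ennreal \<bar>\<mu> (f i)\<bar>)"
      by (subst suminf_finite[of "{..<n}"]) (auto simp: D_def signed_borel_measure_empty[OF \<mu>])
    also have "\<dots> = ennreal (\<Sum>A\<in>\<alpha>. \<bar>\<mu> A\<bar>)"
      by (simp add: \<alpha>_eq sum.reindex[OF inj])
    finally show ?thesis .
  qed
  ultimately show ?thesis by simp
qed

lemma total_variation_le:
  assumes \<mu>: "signed_borel_measure \<mu>"
    and bound: "\<And>E. E \<in> sets borel \<Longrightarrow> \<mu> E - \<mu> (- E) \<le> s"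
  shows "total_variation \<mu> \<le> ennreal s"
  unfolding total_variation_def
proof (rule SUP_least, clarify)
  fix A :: "nat \<Rightarrow> 'a set"
  assume A: "range A \<subseteq> sets borel" "disjoint_family A" "(\<Union>i. A i) = UNIV"
  define P where "P i = (if 0 \<le> \<mu> (A i) then A i else {})" for i
  define N where "N i = (if 0 \<le> \<mu> (A i) then {} else A i)" for i
  define E where "E = (\<Union>i. P i)"
  have P: "range P \<subseteq> sets borel" "disjoint_family P" and N: "range N \<subseteq> sets borel" "disjoint_family N"
    using A by (auto simp: P_def N_def disjoint_family_on_def)
  have "(\<Union>i. N i) = - E"
  proof (intro equalityI subsetI)
    have same_cell: "i = j" if "x \<in> A i" "x \<in> A j" for x i j
      using A(2) that unfolding disjoint_family_on_def by blast
    fix x assume "x \<in> (\<Union>i. N i)"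
    then obtain i where i: "x \<in> A i" "\<mu> (A i) < 0" by (auto simp: N_def split: if_splits)
    have "x \<notin> P j" for j
    proof
      assume "x \<in> P j"
      then have "x \<in> A j" "0 \<le> \<mu> (A j)" by (auto simp: P_def split: if_splits)
      with i same_cell show False by force
    qed
    then show "x \<in> - E" by (simp add: E_def)
  next
    fix x assume "x \<in> - E"
    moreover have "x \<in> (\<Union>i. A i)" using A(3) by simp
    ultimately show "x \<in> (\<Union>i. N i)" by (auto simp: E_def P_def N_def split: if_splits)
  qed
  moreover have "(\<lambda>i. \<mu> (P i) - \<mu> (N i)) sums (\<mu> (\<Union>i. P i) - \<mu> (\<Union>i. N i))"
    using \<mu> P N by (intro sums_diff) (auto simp: signed_borel_measure_def)
  moreover have "\<mu> (P i) - \<mu> (N i) = \<bar>\<mu> (A i)\<bar>" for i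
    by (simp add: P_def N_def signed_borel_measure_empty[OF \<mu>])
  ultimately have "(\<lambda>i. \<bar>\<mu> (A i)\<bar>) sums (\<mu> E - \<mu> (- E))"
    by (simp add: E_def)
  then have "(\<Sum>i. ennreal \<bar>\<mu> (A i)\<bar>) = ennreal (\<mu> E - \<mu> (- E))"
    by (simp add: suminf_ennreal2 sums_iff)
  also have "\<dots> \<le> ennreal s"
    using P(1) by (intro ennreal_leI bound) (auto simp: E_def)
  finally show "(\<Sum>i. ennreal \<bar>\<mu> (A i)\<bar>) \<le> ennreal s" .
qed

lemma total_variation_le_of_generator:
  assumes \<mu>: "signed_borel_measure \<mu>" and G: "algebra UNIV G"
    and "sets borel \<subseteq> sigma_sets UNIV G" and "G \<subseteq> sets borel"
    and bound: "\<And>E. E \<in> G \<Longrightarrow> \<mu> E - \<mu> (- E) \<le> s"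
  shows "total_variation \<mu> \<le> ennreal s"
proof -
  define M where "M = {E \<in> sets borel. \<mu> E - \<mu> (- E) \<le> s}"
  have "sigma_sets UNIV G \<subseteq> M"
  proof (rule monotone_class_theorem[OF G])
    show "G \<subseteq> M" using assms(4) bound by (auto simp: M_def)
    show "(\<Union>i. A i) \<in> M" if "range A \<subseteq> M" "incseq A" for A
    proof -
      have A: "range A \<subseteq> sets borel" using that(1) by (auto simp: M_def)
      have "(\<lambda>n. \<mu> (A n) - \<mu> (- A n)) \<longlonglongrightarrow> \<mu> (\<Union>n. A n) - \<mu> (\<Inter>n. - A n)"
        using A that(2)
        by (intro tendsto_diff signed_borel_measure_incseq[OF \<mu>] signed_borel_measure_decseq[OF \<mu>])
          (auto simp: incseq_def decseq_def)
      moreover have "\<forall>n\<ge>0. \<mu> (A n) - \<mu> (- A n) \<le> s" using that(1) by (auto simp: M_def)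
      ultimately have "\<mu> (\<Union>n. A n) - \<mu> (\<Inter>n. - A n) \<le> s" by (rule Lim_bounded)
      then show ?thesis using A by (auto simp: M_def)
    qed
    show "(\<Inter>i. A i) \<in> M" if "range A \<subseteq> M" "decseq A" for A
    proof -
      have A: "range A \<subseteq> sets borel" using that(1) by (auto simp: M_def)
      have "(\<lambda>n. \<mu> (A n) - \<mu> (- A n)) \<longlonglongrightarrow> \<mu> (\<Inter>n. A n) - \<mu> (\<Union>n. - A n)"
        using A that(2)
        by (intro tendsto_diff signed_borel_measure_incseq[OF \<mu>] signed_borel_measure_decseq[OF \<mu>])
          (auto simp: incseq_def decseq_def)
      moreover have "\<forall>n\<ge>0. \<mu> (A n) - \<mu> (- A n) \<le> s" using that(1) by (auto simp: M_def)
      ultimately have "\<mu> (\<Inter>n. A n) - \<mu> (\<Union>n. - A n) \<le> s" by (rule Lim_bounded)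
      then show ?thesis using A by (auto simp: M_def)
    qed
  qed
  with assms(3) show ?thesis
    by (intro total_variation_le[OF \<mu>]) (auto simp: M_def)
qed

lemma total_variation_le_partition_bound:
  assumes \<mu>: "signed_borel_measure \<mu>"
    and partitions: "\<forall>\<alpha>\<in>\<A>. borel_partition \<alpha>" and "directed_by_refinement \<A>"
    and "resolves \<A>"
    and bound: "\<And>\<alpha>. \<alpha> \<in> \<A> \<Longrightarrow> (\<Sum>A\<in>\<alpha>. \<bar>\<mu> A\<bar>) \<le> s"
  shows "total_variation \<mu> \<le> ennreal s"
proof (rule total_variation_le_of_generator[OF \<mu>])
  show "algebra UNIV (\<Union>\<alpha>\<in>\<A>. cell_unions \<alpha>)"
    using partitions \<open>directed_by_refinement \<A>\<close> by (rule algebra_cell_unions_directed)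
  have "\<Union>\<A> \<subseteq> (\<Union>\<alpha>\<in>\<A>. cell_unions \<alpha>)"
    by (force simp: cell_unions_def)
  then show "sets borel \<subseteq> sigma_sets UNIV (\<Union>\<alpha>\<in>\<A>. cell_unions \<alpha>)"
    using \<open>resolves \<A>\<close> unfolding resolves_def by (metis sigma_sets_mono')
  show "(\<Union>\<alpha>\<in>\<A>. cell_unions \<alpha>) \<subseteq> sets borel"
    using partitions by (auto dest: cell_unions_subset_borel)
  show "\<mu> E - \<mu> (- E) \<le> s" if E: "E \<in> (\<Union>\<alpha>\<in>\<A>. cell_unions \<alpha>)" for E
  proof -
    obtain \<alpha> where "\<alpha> \<in> \<A>" "E \<in> cell_unions \<alpha>" using E by blast
    then have "\<mu> E - \<mu> (- E) \<le> (\<Sum>A\<in>\<alpha>. \<bar>\<mu> A\<bar>)"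
      using \<mu> partitions by (simp add: diff_Compl_le_sum_abs)
    also have "\<dots> \<le> s" using bound \<open>\<alpha> \<in> \<A>\<close> .
    finally show ?thesis .
  qed
qed

theorem mainTheorem2:
  fixes \<mu> :: "'a::t2_space set \<Rightarrow> real"
    and \<A> :: "'a set set set"
  assumes "signed_borel_measure \<mu>"
    and "total_variation \<mu> < \<infinity>"
    and "\<forall>\<alpha>\<in>\<A>. borel_partition \<alpha>"
    and "directed_by_refinement \<A>"
  shows "(\<forall>\<alpha>\<in>\<A>. \<forall>\<beta>\<in>\<A>. refines \<alpha> \<beta> \<longrightarrow>
            (\<Sum>A\<in>\<alpha>. \<bar>\<mu> A\<bar>) \<le> (\<Sum>B\<in>\<beta>. \<bar>\<mu> B\<bar>))
       \<and> (resolves \<A> \<longrightarrow>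
            total_variation \<mu> = (SUP \<alpha>\<in>\<A>. ennreal (\<Sum>A\<in>\<alpha>. \<bar>\<mu> A\<bar>)))"
proof (intro conjI impI ballI)
  fix \<alpha> \<beta> assume "\<alpha> \<in> \<A>" "\<beta> \<in> \<A>" "refines \<alpha> \<beta>"
  with assms(1,3) show "(\<Sum>A\<in>\<alpha>. \<bar>\<mu> A\<bar>) \<le> (\<Sum>B\<in>\<beta>. \<bar>\<mu> B\<bar>)"
    by (simp add: sum_abs_refines_mono)
next
  assume "resolves \<A>"
  let ?S = "SUP \<alpha>\<in>\<A>. ennreal (\<Sum>A\<in>\<alpha>. \<bar>\<mu> A\<bar>)"
  have S_le: "?S \<le> total_variation \<mu>"
    using assms(1,3) by (auto intro!: SUP_least sum_abs_le_total_variation)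
  with assms(2) obtain s where s: "?S = ennreal s" "0 \<le> s"
    by (cases ?S rule: ennreal_cases) (auto simp: top_unique)
  have "(\<Sum>A\<in>\<alpha>. \<bar>\<mu> A\<bar>) \<le> s" if "\<alpha> \<in> \<A>" for \<alpha>
    using SUP_upper[OF that, of "\<lambda>\<alpha>. ennreal (\<Sum>A\<in>\<alpha>. \<bar>\<mu> A\<bar>)"] s by simp
  then have "total_variation \<mu> \<le> ?S"
    unfolding s(1) by (rule total_variation_le_partition_bound[OF assms(1,3,4) \<open>resolves \<A>\<close>])
  with S_le show "total_variation \<mu> = ?S" by (rule antisym[rotated])
qed

end
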